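(* Let $G$ be a directed graph with vertices $s,t$ and let $k\ge1$. For every $C\in U^k$ there exists $\hat C\in U^k_{\mathrm{lr}}$ such that $\mu_e(C)=\mu_e(\hat C)$ for all $e\in E(G)$.
   Context: An $s$-$t$ cut of a directed graph $G$ is a set $X\subseteq E(G)$ such that removing $X$ leaves no directed $s$-$t$ path; $\Gamma_G(s,t)$ is the set of $s$-$t$ cuts of minimum cardinality. For $s$-$t$ cuts $X,Y$, write $X\le Y$ if every directed $s$-$t$ path in $G$ meets an edge of $X$ at or before (along the path) an edge of $Y$. $U^k$ denotes the set of $k$-tuples $[X_1,\dots,X_k]$ with each $X_i\in\Gamma_G(s,t)$, and $U^k_{\mathrm{lr}}\subseteq U^k$ the set of those in left-right order, i.e. with $X_i\le X_j$ for all $i<j$. For $C=[X_1,\dots,X_k]$ and $e\in E(G)$, the multiplicity $\mu_e(C)$ is the number of indices $i$ with $e\in X_i$. *)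

theory Defs
  imports "Graph_Theory.Digraph" "Graph_Theory.Arc_Walk"
begin

definition st_cut :: "('a,'b) pre_digraph \<Rightarrow> 'a \<Rightarrow> 'a \<Rightarrow> 'b set \<Rightarrow> bool" where
  "st_cut G s t X \<longleftrightarrow> X \<subseteq> arcs G \<and>
     (\<forall>p. pre_digraph.apath G s p t \<longrightarrow> set p \<inter> X \<noteq> {})"

definition min_cuts :: "('a,'b) pre_digraph \<Rightarrow> 'a \<Rightarrow> 'a \<Rightarrow> 'b set set" where
  "min_cuts G s t = {X. st_cut G s t X \<and> (\<forall>Y. st_cut G s t Y \<longrightarrow> card X \<le> card Y)}"

definition cut_le :: "('a,'b) pre_digraph \<Rightarrow> 'a \<Rightarrow> 'a \<Rightarrow> 'b set \<Rightarrow> 'b set \<Rightarrow> bool" where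
  "cut_le G s t X Y \<longleftrightarrow> (\<forall>p. pre_digraph.apath G s p t \<longrightarrow>
     (\<exists>i j. i \<le> j \<and> j < length p \<and> p ! i \<in> X \<and> p ! j \<in> Y))"

definition U :: "('a,'b) pre_digraph \<Rightarrow> 'a \<Rightarrow> 'a \<Rightarrow> nat \<Rightarrow> 'b set list set" where
  "U G s t k = {C. length C = k \<and> (\<forall>i<k. C ! i \<in> min_cuts G s t)}"

definition U_lr :: "('a,'b) pre_digraph \<Rightarrow> 'a \<Rightarrow> 'a \<Rightarrow> nat \<Rightarrow> 'b set list set" where
  "U_lr G s t k = {C \<in> U G s t k. \<forall>i j. i < j \<and> j < k \<longrightarrow> cut_le G s t (C ! i) (C ! j)}"

definition mult :: "'b set list \<Rightarrow> 'b \<Rightarrow> nat" where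
  "mult C e = card {i. i < length C \<and> e \<in> C ! i}"

end

theory Submission
  imports Defs
begin

text \<open>
  For each cut \<open>C ! j\<close> let \<open>R j\<close> be the set of vertices reachable from \<open>s\<close> without using
  an arc of \<open>C ! j\<close>, and let \<open>c v\<close> count the \<open>j\<close> with \<open>v \<in> R j\<close>; then \<open>c s = k\<close> and
  \<open>c t = 0\<close>. The out-boundaries of the nested level sets \<open>{v. c v \<ge> k - i}\<close>, \<open>i < k\<close>, form
  a left-right ordered tuple of \<open>s\<close>-\<open>t\<close> cuts in which an arc \<open>e\<close> has multiplicity
  \<open>c (tail e) - c (head e)\<close>, and this is at most \<open>\<mu>\<^sub>e(C)\<close> because \<open>e\<close> lies in \<open>C ! j\<close> whenever
  it leaves \<open>R j\<close>. Summing multiplicities over all arcs gives the total size of a tuple,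
  which for the new tuple is at least that of the tuple of minimum cuts \<open>C\<close>; hence all
  these inequalities are equalities.
\<close>

definition arcs_leaving :: "('a,'b) pre_digraph \<Rightarrow> 'a set \<Rightarrow> 'b set" where
  "arcs_leaving G S = {e \<in> arcs G. tail G e \<in> S \<and> head G e \<notin> S}"

definition reachable_avoiding :: "('a,'b) pre_digraph \<Rightarrow> 'b set \<Rightarrow> 'a \<Rightarrow> 'a set" where
  "reachable_avoiding G X s = {v. \<exists>p. pre_digraph.awalk G s p v \<and> set p \<inter> X = {}}"

definition level_cuts :: "('a,'b) pre_digraph \<Rightarrow> nat \<Rightarrow> ('a \<Rightarrow> nat) \<Rightarrow> 'b set list" where
  "level_cuts G k c = map (\<lambda>i. arcs_leaving G {v. k - i \<le> c v}) [0..<k]"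

definition side_count :: "('a,'b) pre_digraph \<Rightarrow> 'b set list \<Rightarrow> 'a \<Rightarrow> 'a \<Rightarrow> nat" where
  "side_count G C s v = card {j. j < length C \<and> v \<in> reachable_avoiding G (C ! j) s}"

lemma mult_eq_sum_of_bool: "mult L e = (\<Sum>i<length L. of_bool (e \<in> L ! i))"
proof -
  have "{i. i < length L \<and> e \<in> L ! i} = {..<length L} \<inter> {i. e \<in> L ! i}" by auto
  then show ?thesis by (simp add: mult_def)
qed

lemma sum_mult_eq_sum_card:
  assumes "finite A" and "\<And>i. i < length L \<Longrightarrow> L ! i \<subseteq> A"
  shows "(\<Sum>e\<in>A. mult L e) = (\<Sum>i<length L. card (L ! i))"
proof -
  have "(\<Sum>e\<in>A. mult L e) = (\<Sum>i<length L. \<Sum>e\<in>A. of_bool (e \<in> L ! i))"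
    unfolding mult_eq_sum_of_bool by (rule sum.swap)
  also have "\<dots> = (\<Sum>i<length L. card (L ! i))"
    using assms by (intro sum.cong) (auto simp: Int_absorb1)
  finally show ?thesis .
qed

lemma mult_level_cuts:
  assumes "e \<in> arcs G" and "c (tail G e) \<le> k" and "c (head G e) \<le> k"
  shows "mult (level_cuts G k c) e = c (tail G e) - c (head G e)"
proof -
  have "{i. i < length (level_cuts G k c) \<and> e \<in> level_cuts G k c ! i} =
      {i. i < k \<and> k - i \<le> c (tail G e) \<and> \<not> k - i \<le> c (head G e)}"
    using assms(1) by (auto simp: level_cuts_def arcs_leaving_def)
  also have "\<dots> = {k - c (tail G e)..<k - c (head G e)}"
    using assms(2,3) by auto
  finally show ?thesis using assms(2,3) by (simp add: mult_def)
qed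

lemma card_diff_le_mult:
  assumes "\<And>j. j < length C \<Longrightarrow> arcs_leaving G (R j) \<subseteq> C ! j" and "e \<in> arcs G"
  shows "card {j. j < length C \<and> tail G e \<in> R j} - card {j. j < length C \<and> head G e \<in> R j}
    \<le> mult C e"
proof -
  let ?T = "{j. j < length C \<and> tail G e \<in> R j}" and ?H = "{j. j < length C \<and> head G e \<in> R j}"
  have "card ?T - card ?H \<le> card (?T - ?H)" by (intro diff_card_le_card_Diff) auto
  also have "\<dots> \<le> mult C e"
    unfolding mult_def using assms by (intro card_mono) (auto simp: arcs_leaving_def)
  finally show ?thesis .
qed

text \<open>
  Double counting turns the arcwise inequality into \<open>\<Sum>i. card (C' ! i) \<le> \<Sum>i. card (C ! i)\<close>,
  while minimality of the \<open>C ! i\<close> gives the reverse inequality termwise.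
\<close>
lemma dominated_cut_tuple:
  assumes "finite (arcs G)" and "C \<in> U G s t k" and "length C' = k"
    and cuts: "\<And>i. i < k \<Longrightarrow> st_cut G s t (C' ! i)"
    and dominated: "\<And>e. e \<in> arcs G \<Longrightarrow> mult C' e \<le> mult C e"
  shows "C' \<in> U G s t k" and "\<forall>e \<in> arcs G. mult C' e = mult C e"
proof -
  have "length C = k" and min: "\<And>i. i < k \<Longrightarrow> C ! i \<in> min_cuts G s t"
    using assms(2) by (auto simp: U_def)
  have card_le: "card (C ! i) \<le> card (C' ! i)" if "i < k" for i
    using min[OF that] cuts[OF that] by (simp add: min_cuts_def)
  have sub: "C ! i \<subseteq> arcs G" "C' ! i \<subseteq> arcs G" if "i < k" for i
    using min[OF that] cuts[OF that] by (auto simp: min_cuts_def st_cut_def)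
  have "(\<Sum>i<k. card (C ! i)) = (\<Sum>e\<in>arcs G. mult C e)"
    using sum_mult_eq_sum_card[OF assms(1), of C] sub \<open>length C = k\<close> by simp
  moreover have "(\<Sum>e\<in>arcs G. mult C' e) = (\<Sum>i<k. card (C' ! i))"
    using sum_mult_eq_sum_card[OF assms(1), of C'] sub \<open>length C' = k\<close> by simp
  moreover have "(\<Sum>e\<in>arcs G. mult C' e) \<le> (\<Sum>e\<in>arcs G. mult C e)"
    using dominated by (rule sum_mono)
  moreover have "(\<Sum>i<k. card (C ! i)) \<le> (\<Sum>i<k. card (C' ! i))"
    using card_le by (intro sum_mono) simp
  ultimately have sum_card_eq: "(\<Sum>i<k. card (C ! i)) = (\<Sum>i<k. card (C' ! i))"
    and sum_mult_eq: "(\<Sum>e\<in>arcs G. mult C' e) = (\<Sum>e\<in>arcs G. mult C e)"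
    by linarith+
  have "C' ! i \<in> min_cuts G s t" if "i < k" for i
  proof -
    have "card (C ! i) = card (C' ! i)"
      using sum_mono_inv[OF sum_card_eq] card_le that by simp
    then show ?thesis using min[OF that] cuts[OF that] by (simp add: min_cuts_def)
  qed
  then show "C' \<in> U G s t k" using \<open>length C' = k\<close> by (simp add: U_def)
  show "\<forall>e \<in> arcs G. mult C' e = mult C e"
    using sum_mono_inv[OF sum_mult_eq] dominated assms(1) by blast
qed

context wf_digraph
begin

lemma awalk_last_arc_head:
  assumes "awalk u p v" and "p \<noteq> []"
  shows "head G (p ! (length p - 1)) = v"
  using assms awlast_if_cas[of u p v] by (auto simp: awalk_def awalk_verts_conv last_conv_nth)

lemma awalk_leaves_set_before:
  assumes "awalk u p v" and "u \<in> S" and "j < length p" and "head G (p ! j) \<notin> S"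
  shows "\<exists>i\<le>j. p ! i \<in> arcs_leaving G S"
  using assms
proof (induction p arbitrary: u j)
  case Nil
  then show ?case by simp
next
  case (Cons e es)
  then have e: "e \<in> arcs G" "tail G e \<in> S" and es: "awalk (head G e) es v"
    by (auto simp: awalk_Cons_iff)
  show ?case
  proof (cases "head G e \<in> S")
    case True
    with Cons.prems obtain j' where j': "j = Suc j'" by (cases j) auto
    with Cons.IH[OF es True] Cons.prems obtain i where "i \<le> j'" "es ! i \<in> arcs_leaving G S"
      by auto
    with j' show ?thesis by (intro exI[of _ "Suc i"]) simp
  next
    case False
    with e show ?thesis by (intro exI[of _ 0]) (simp add: arcs_leaving_def)
  qed
qed

lemma st_cut_arcs_leaving:
  assumes "s \<in> S" and "t \<notin> S"
  shows "st_cut G s t (arcs_leaving G S)"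
  unfolding st_cut_def
proof (intro conjI allI impI)
  show "arcs_leaving G S \<subseteq> arcs G" by (auto simp: arcs_leaving_def)
  fix p assume "apath s p t"
  then have walk: "awalk s p t" by (simp add: apath_def)
  with assms have "p \<noteq> []" by (auto simp: awalk_Nil_iff)
  then have last: "length p - 1 < length p" by simp
  have "head G (p ! (length p - 1)) \<notin> S"
    using awalk_last_arc_head[OF walk \<open>p \<noteq> []\<close>] assms(2) by simp
  then obtain i where "i \<le> length p - 1" "p ! i \<in> arcs_leaving G S"
    using awalk_leaves_set_before[OF walk assms(1) last] by blast
  with last have "p ! i \<in> set p \<inter> arcs_leaving G S" by simp
  then show "set p \<inter> arcs_leaving G S \<noteq> {}" by blast
qed

lemma cut_le_arcs_leaving:
  assumes "S \<subseteq> S'" and "s \<in> S" and "t \<notin> S'"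
  shows "cut_le G s t (arcs_leaving G S) (arcs_leaving G S')"
  unfolding cut_le_def
proof (intro allI impI)
  fix p assume path: "apath s p t"
  have "st_cut G s t (arcs_leaving G S')" using assms by (intro st_cut_arcs_leaving) auto
  with path have "set p \<inter> arcs_leaving G S' \<noteq> {}" by (simp add: st_cut_def)
  then obtain j where j: "j < length p" "p ! j \<in> arcs_leaving G S'"
    by (auto simp: in_set_conv_nth)
  with assms have "head G (p ! j) \<notin> S" by (auto simp: arcs_leaving_def)
  with path assms j obtain i where "i \<le> j" "p ! i \<in> arcs_leaving G S"
    using awalk_leaves_set_before[of s p t S j] by (auto simp: apath_def)
  with j show "\<exists>i j. i \<le> j \<and> j < length p \<and> p ! i \<in> arcs_leaving G S \<and> p ! j \<in> arcs_leaving G S'"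
    by blast
qed

lemma start_in_reachable_avoiding: "s \<in> verts G \<Longrightarrow> s \<in> reachable_avoiding G X s"
  unfolding reachable_avoiding_def by (auto simp: awalk_Nil_iff intro: exI[of _ "[]"])

lemma target_notin_reachable_avoiding:
  assumes "st_cut G s t X"
  shows "t \<notin> reachable_avoiding G X s"
proof
  assume "t \<in> reachable_avoiding G X s"
  then obtain p where p: "awalk s p t" "set p \<inter> X = {}" by (auto simp: reachable_avoiding_def)
  then have "apath s (awalk_to_apath p) t" and "set (awalk_to_apath p) \<inter> X = {}"
    using apath_awalk_to_apath awalk_to_apath_subset by blast+
  with assms show False by (auto simp: st_cut_def)
qed

lemma arcs_leaving_reachable_avoiding: "arcs_leaving G (reachable_avoiding G X s) \<subseteq> X"
proof
  fix e assume e: "e \<in> arcs_leaving G (reachable_avoiding G X s)"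
  then obtain p where p: "awalk s p (tail G e)" "set p \<inter> X = {}" and "e \<in> arcs G"
    and not_reached: "head G e \<notin> reachable_avoiding G X s"
    by (auto simp: arcs_leaving_def reachable_avoiding_def)
  have "awalk s (p @ [e]) (head G e)"
    using awalk_appendI[OF p(1) arc_implies_awalk[OF \<open>e \<in> arcs G\<close>]] .
  with not_reached have "set (p @ [e]) \<inter> X \<noteq> {}" unfolding reachable_avoiding_def by blast
  with p(2) show "e \<in> X" by auto
qed

lemma st_cut_level_cuts:
  assumes "k \<le> c s" and "c t = 0" and "i < k"
  shows "st_cut G s t (level_cuts G k c ! i)"
  using st_cut_arcs_leaving[of s "{v. k - i \<le> c v}" t] assms by (simp add: level_cuts_def)

lemma cut_le_level_cuts:
  assumes "k \<le> c s" and "c t = 0" and "i < j" and "j < k"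
  shows "cut_le G s t (level_cuts G k c ! i) (level_cuts G k c ! j)"
proof -
  have "{v. k - i \<le> c v} \<subseteq> {v. k - j \<le> c v}" using assms(3) by auto
  with assms show ?thesis
    using cut_le_arcs_leaving[of "{v. k - i \<le> c v}" "{v. k - j \<le> c v}" s t]
    by (simp add: level_cuts_def)
qed

lemma side_count_le: "side_count G C s v \<le> length C"
  unfolding side_count_def by (rule card_mono[of "{..<length C}", simplified]) auto

lemma side_count_start: "s \<in> verts G \<Longrightarrow> side_count G C s s = length C"
  by (simp add: side_count_def start_in_reachable_avoiding)

lemma side_count_target:
  "(\<And>j. j < length C \<Longrightarrow> st_cut G s t (C ! j)) \<Longrightarrow> side_count G C s t = 0"
  by (simp add: side_count_def target_notin_reachable_avoiding)

lemma mult_level_cuts_side_count_le: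
  assumes "e \<in> arcs G"
  shows "mult (level_cuts G (length C) (side_count G C s)) e \<le> mult C e"
proof -
  have "mult (level_cuts G (length C) (side_count G C s)) e =
      side_count G C s (tail G e) - side_count G C s (head G e)"
    using assms side_count_le by (intro mult_level_cuts)
  also have "\<dots> \<le> mult C e"
    unfolding side_count_def using assms arcs_leaving_reachable_avoiding
    by (intro card_diff_le_mult)
  finally show ?thesis .
qed

end

theorem proposition1:
  fixes G :: "('a,'b) pre_digraph" and s t :: 'a and k :: nat
  assumes "fin_digraph G" and "s \<in> verts G" and "t \<in> verts G" and "k \<ge> 1"
    and "C \<in> U G s t k"
  shows "\<exists>C' \<in> U_lr G s t k. \<forall>e \<in> arcs G. mult C e = mult C' e"
proof -
  interpret fin_digraph G by fact
  have "length C = k" and cuts: "\<And>j. j < k \<Longrightarrow> st_cut G s t (C ! j)"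
    using assms(5) by (auto simp: U_def min_cuts_def)
  have s_count: "k \<le> side_count G C s s"
    using side_count_start[OF assms(2)] \<open>length C = k\<close> by simp
  have t_count: "side_count G C s t = 0"
    using cuts \<open>length C = k\<close> by (intro side_count_target) simp
  define C' where "C' = level_cuts G k (side_count G C s)"
  have "length C' = k" by (simp add: C'_def level_cuts_def)
  moreover have "\<And>i. i < k \<Longrightarrow> st_cut G s t (C' ! i)"
    unfolding C'_def using s_count t_count by (rule st_cut_level_cuts)
  moreover have "\<And>e. e \<in> arcs G \<Longrightarrow> mult C' e \<le> mult C e"
    unfolding C'_def using mult_level_cuts_side_count_le[of _ C s] \<open>length C = k\<close> by simp
  ultimately have "C' \<in> U G s t k" and "\<forall>e \<in> arcs G. mult C' e = mult C e"
    using dominated_cut_tuple[OF finite_arcs assms(5)] by blast+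
  moreover have "\<And>i j. i < j \<Longrightarrow> j < k \<Longrightarrow> cut_le G s t (C' ! i) (C' ! j)"
    unfolding C'_def using s_count t_count by (rule cut_le_level_cuts)
  ultimately show ?thesis by (auto simp: U_lr_def)
qed

end
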